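(* There exists a sequence of functions $f_1, f_2, \ldots : \mathbb{R}^2 \to \{-1,1\}$ such that: (a) For every fixed depth $d \geq 1$ there is a constant $b > 1$ (depending only on $d$) such that for every $m$, every ReLU MLP classifier with input in $\mathbb{R}^2$, $d$ hidden layers and all hidden layers of width $w$ that computes $f_m$ exactly (i.e. outputs $f_m(x)$ for every $x \in \mathbb{R}^2$) satisfies $w \geq b^m$. (b) For every $m$ there is a ReLU MLP classifier with a number of parameters linear in $m$ that computes $f_m$ exactly; concretely, one with depth $m+2$ and every hidden layer of width at most $4$.
   Context: Let $\sigma(t) = \max\{0,t\}$ act elementwise. A ReLU MLP classifier with input in $\mathbb{R}^2$, $d$ hidden layers and hidden widths $w_1,\dots,w_d$ is a map $F:\mathbb{R}^2 \to \{-1,1\}$ of the form $h_0 = x$, $h_i = \sigma(A_i h_{i-1} + c_i)$ for $i=1,\dots,d$ (with $A_i \in \mathbb{R}^{w_i \times w_{i-1}}$, $w_0 = 2$, $c_i \in \mathbb{R}^{w_i}$), and $F(x) = 1$ if $v^\top h_d + v_0 > 0$ and $F(x) = -1$ otherwise, for some $v \in \mathbb{R}^{w_d}$, $v_0 \in \mathbb{R}$. Its depth is the number of hidden layers $d$; layers of smaller width are regarded as width-$w$ layers with some zero parameters. *)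

theory Defs
  imports Main "HOL.Real"
begin

text \<open>A hidden layer is a triple (w, A, c): output width w, weight matrix A
(entry A i j for i < w and j < previous width) and bias c (entry c i, i < w).
Vectors are represented as functions nat => real; coordinates at or beyond the
width are irrelevant (hidden activations are set to 0 there).\<close>

type_synonym layer = "nat \<times> (nat \<Rightarrow> nat \<Rightarrow> real) \<times> (nat \<Rightarrow> real)"

definition relu :: "real \<Rightarrow> real" where
  "relu t = max 0 t"

definition layer_apply :: "nat \<Rightarrow> layer \<Rightarrow> (nat \<Rightarrow> real) \<Rightarrow> (nat \<Rightarrow> real)" where
  "layer_apply w0 L h =
     (case L of (w, A, c) \<Rightarrow>
        (\<lambda>i. if i < w then relu ((\<Sum>j<w0. A i j * h j) + c i) else 0))"

fun mlp_forward :: "nat \<Rightarrow> layer list \<Rightarrow> (nat \<Rightarrow> real) \<Rightarrow> nat \<times> (nat \<Rightarrow> real)" where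
  "mlp_forward w0 [] h = (w0, h)"
| "mlp_forward w0 (L # Ls) h = mlp_forward (fst L) Ls (layer_apply w0 L h)"

definition input_vec :: "real \<times> real \<Rightarrow> (nat \<Rightarrow> real)" where
  "input_vec x = (\<lambda>i. if i = 0 then fst x else if i = 1 then snd x else 0)"

definition mlp_classifier ::
  "layer list \<Rightarrow> (nat \<Rightarrow> real) \<Rightarrow> real \<Rightarrow> real \<times> real \<Rightarrow> int" where
  "mlp_classifier Ls v v0 x =
     (case mlp_forward 2 Ls (input_vec x) of (wd, h) \<Rightarrow>
        if (\<Sum>i<wd. v i * h i) + v0 > 0 then 1 else -1)"

end

theory Submission
  imports Defs Complex_Main
begin

(* Along the line x2 = 0 a ReLU network of depth d and width w computes a continuous piecewise
   affine function of one variable. A ReLU neuron adds at most one breakpoint per affine piece of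
   its input (where that piece crosses zero), so there are fewer than (w + 1)^d breakpoints.
   The (m + 2)-fold iterate of the tent map, computed by a width-2 network with m + 2 layers,
   changes sign between consecutive dyadic points k / 2^(m+2) of [0, 1]; this forces 2^(m+1)
   breakpoints, so (w + 1)^d > 2^(m+1) and w >= 2^(m / (2 d)). Width 1 must be treated apart,
   since (w + 1)^d does not grow with m there; such networks are monotone along a line. *)

(* g is continuous and affine on every interval whose interior avoids the breakpoints B. *)
definition piecewise_affine :: "real set \<Rightarrow> (real \<Rightarrow> real) \<Rightarrow> bool" where
  "piecewise_affine B g \<longleftrightarrow> finite B \<and>
     (\<forall>x y z. x < y \<longrightarrow> y < z \<longrightarrow> B \<inter> {x<..<z} = {} \<longrightarrow>
        g y = ((z - y) * g x + (y - x) * g z) / (z - x))"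

lemma piecewise_affineD:
  "piecewise_affine B g \<Longrightarrow> x < y \<Longrightarrow> y < z \<Longrightarrow> B \<inter> {x<..<z} = {} \<Longrightarrow>
     g y = ((z - y) * g x + (y - x) * g z) / (z - x)"
  unfolding piecewise_affine_def by blast

lemma piecewise_affine_finite: "piecewise_affine B g \<Longrightarrow> finite B"
  unfolding piecewise_affine_def by blast

lemma piecewise_affine_subset:
  "piecewise_affine B g \<Longrightarrow> B \<subseteq> B' \<Longrightarrow> finite B' \<Longrightarrow> piecewise_affine B' g"
  unfolding piecewise_affine_def by blast

lemma piecewise_affine_const: "finite B \<Longrightarrow> piecewise_affine B (\<lambda>t. k)"
  unfolding piecewise_affine_def by (auto simp: field_simps)

lemma piecewise_affine_ident: "finite B \<Longrightarrow> piecewise_affine B (\<lambda>t. t)"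
  unfolding piecewise_affine_def by (auto simp: field_simps)

lemma piecewise_affine_add:
  assumes "piecewise_affine B f" "piecewise_affine B g"
  shows "piecewise_affine B (\<lambda>t. f t + g t)"
  using assms unfolding piecewise_affine_def
  by (auto simp: add_divide_distrib[symmetric] algebra_simps)

lemma piecewise_affine_cmult:
  assumes "piecewise_affine B f" shows "piecewise_affine B (\<lambda>t. a * f t)"
  using assms unfolding piecewise_affine_def
  by (auto simp: algebra_simps times_divide_eq_right[symmetric])

lemma piecewise_affine_sum:
  "finite B \<Longrightarrow> (\<And>j. j < n \<Longrightarrow> piecewise_affine B (f j)) \<Longrightarrow>
     piecewise_affine B (\<lambda>t. \<Sum>j<(n::nat). f j t)"
  by (induction n) (auto intro: piecewise_affine_const piecewise_affine_add)

lemma piecewise_affine_sign_change: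
  assumes "piecewise_affine B g" "x < y" "y < z" "g x \<le> 0" "g y > 0" "g z \<le> 0"
  shows "B \<inter> {x<..<z} \<noteq> {}"
proof
  assume "B \<inter> {x<..<z} = {}"
  then have "g y = ((z - y) * g x + (y - x) * g z) / (z - x)"
    using piecewise_affineD[OF assms(1-3)] by blast
  moreover have "((z - y) * g x + (y - x) * g z) / (z - x) \<le> 0"
    using assms by (intro divide_nonpos_pos add_nonpos_nonpos mult_nonneg_nonpos) auto
  ultimately show False using assms by simp
qed

lemma piecewise_affine_two_zeros:
  assumes g: "piecewise_affine B g" and gap: "B \<inter> {a<..<c} = {}"
    and z: "z1 \<in> {a..c}" "z2 \<in> {a..c}" "z1 < z2" "g z1 = 0" "g z2 = 0" and s: "s \<in> {a..c}"
  shows "g s = 0"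
proof -
  have gap': "B \<inter> {x<..<y} = {}" if "x \<in> {a..c}" "y \<in> {a..c}" for x y
    using gap that by auto
  consider "s < z1" | "z1 < s \<and> s < z2" | "z2 < s" | "s = z1 \<or> s = z2" by linarith
  then show ?thesis
  proof cases
    case 1
    with piecewise_affineD[OF g 1 z(3) gap'] show ?thesis using z s by simp
  next
    case 2
    with piecewise_affineD[OF g _ _ gap'[of z1 z2]] show ?thesis using z by simp
  next
    case 3
    with piecewise_affineD[OF g z(3) 3 gap'] show ?thesis using z s by simp
  qed (use z in auto)
qed

(* The breakpoints that relu creates: a zero of g off B is one unless g vanishes on the whole
   piece containing it, and each of the card B + 1 pieces contains at most one. *)
definition isolated_zeros :: "real set \<Rightarrow> (real \<Rightarrow> real) \<Rightarrow> real set" where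
  "isolated_zeros B g = {t. t \<notin> B \<and> g t = 0 \<and>
     (\<exists>s. g s \<noteq> 0 \<and> B \<inter> {min t s<..<max t s} = {})}"

lemma isolated_zeros_separated:
  assumes g: "piecewise_affine B g" and z: "z1 \<in> isolated_zeros B g" "z2 \<in> isolated_zeros B g"
    and "z1 < z2"
  shows "card {b\<in>B. b < z1} < card {b\<in>B. b < z2}"
proof (rule psubset_card_mono)
  show "finite {b\<in>B. b < z2}" using piecewise_affine_finite[OF g] by simp
  show "{b\<in>B. b < z1} \<subset> {b\<in>B. b < z2}"
  proof
    show "{b\<in>B. b < z1} \<subseteq> {b\<in>B. b < z2}" using \<open>z1 < z2\<close> by auto
    show "{b\<in>B. b < z1} \<noteq> {b\<in>B. b < z2}"
    proof
      assume same: "{b\<in>B. b < z1} = {b\<in>B. b < z2}"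
      obtain s where s: "g s \<noteq> 0" "B \<inter> {min z1 s<..<max z1 s} = {}"
        using z(1) unfolding isolated_zeros_def by blast
      have "b \<notin> B" if "z1 \<le> b" "b \<le> z2" for b
      proof
        assume "b \<in> B"
        moreover have "b \<noteq> z2" using z(2) \<open>b \<in> B\<close> unfolding isolated_zeros_def by auto
        ultimately have "b \<in> {b\<in>B. b < z2}" using that by auto
        then have "b < z1" using same by blast
        with that show False by simp
      qed
      then have "B \<inter> {z1..z2} = {}" by auto
      moreover have "{min z1 s<..<max z2 s} \<subseteq> {min z1 s<..<max z1 s} \<union> {z1..z2}"
        using \<open>z1 < z2\<close> by (auto simp: min_less_iff_disj less_max_iff_disj)
      ultimately have gap: "B \<inter> {min z1 s<..<max z2 s} = {}" using s(2) by blast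
      have "g z1 = 0" "g z2 = 0" using z unfolding isolated_zeros_def by blast+
      then have "g s = 0"
        using piecewise_affine_two_zeros[OF g gap, of z1 z2 s] \<open>z1 < z2\<close> by simp
      with s(1) show False ..
    qed
  qed
qed

lemma card_isolated_zeros:
  assumes g: "piecewise_affine B g"
  shows "finite (isolated_zeros B g)" "card (isolated_zeros B g) \<le> card B + 1"
proof -
  define rank where "rank t = card {b\<in>B. b < t}" for t
  have "strict_mono_on (isolated_zeros B g) rank"
    unfolding rank_def by (rule strict_mono_onI) (rule isolated_zeros_separated[OF g])
  then have inj: "inj_on rank (isolated_zeros B g)"
    by (rule strict_mono_on_imp_inj_on)
  have img: "rank ` isolated_zeros B g \<subseteq> {..card B}"
    using piecewise_affine_finite[OF g] by (auto simp: rank_def intro!: card_mono)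
  show "finite (isolated_zeros B g)"
    using inj_on_finite[OF inj img] by simp
  show "card (isolated_zeros B g) \<le> card B + 1"
    using card_inj_on_le[OF inj img] by simp
qed

lemma isolated_zero_between:
  assumes g: "piecewise_affine B g" and "x < z" "B \<inter> {x<..<z} = {}" "g x * g z < 0"
  shows "\<exists>p\<in>{x<..<z}. p \<in> isolated_zeros B g"
proof -
  define \<theta> where "\<theta> = g x / (g x - g z)"
  have \<theta>: "0 < \<theta>" "\<theta> < 1"
    using assms(4) by (cases "g x > 0"; auto simp: \<theta>_def field_simps mult_less_0_iff)+
  define p where "p = x + \<theta> * (z - x)"
  have "0 < \<theta> * (z - x)" "\<theta> * (z - x) < z - x"
    using \<theta> \<open>x < z\<close> mult_strict_right_mono[of \<theta> 1 "z - x"] by simp_all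
  then have p: "x < p" "p < z" unfolding p_def by linarith+
  have "g p = ((z - p) * g x + (p - x) * g z) / (z - x)"
    using piecewise_affineD[OF g p] assms(3) by blast
  also have "\<dots> = 0"
  proof -
    have "g x - g z \<noteq> 0" using assms(4) by auto
    then show ?thesis using \<open>x < z\<close> by (simp add: p_def \<theta>_def field_simps)
  qed
  finally have "g p = 0" .
  moreover have "p \<notin> B" "g x \<noteq> 0" using p assms(3,4) by auto
  moreover have "B \<inter> {min p x<..<max p x} = {}"
    using p assms(3) by (auto simp: min_def max_def)
  ultimately have "p \<in> isolated_zeros B g" unfolding isolated_zeros_def by blast
  with p show ?thesis by auto
qed

lemma piecewise_affine_relu:
  assumes g: "piecewise_affine B g"
  shows "piecewise_affine (B \<union> isolated_zeros B g) (\<lambda>t. relu (g t))"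
  unfolding piecewise_affine_def
proof (intro conjI allI impI)
  show "finite (B \<union> isolated_zeros B g)"
    using piecewise_affine_finite[OF g] card_isolated_zeros[OF g] by simp
  fix x y z
  assume xy: "x < y" and yz: "y < z" and gap: "(B \<union> isolated_zeros B g) \<inter> {x<..<z} = {}"
  have gapB: "B \<inter> {x<..<z} = {}" and gapZ: "isolated_zeros B g \<inter> {x<..<z} = {}"
    using gap by auto
  have gy: "g y = ((z - y) * g x + (y - x) * g z) / (z - x)"
    using piecewise_affineD[OF g xy yz gapB] .
  have "\<not> g x * g z < 0"
  proof
    assume "g x * g z < 0"
    with isolated_zero_between[OF g _ gapB] xy yz obtain p
      where "p \<in> {x<..<z}" "p \<in> isolated_zeros B g" by auto
    with gapZ show False by blast
  qed
  then consider "0 \<le> g x" "0 \<le> g z" | "g x \<le> 0" "g z \<le> 0"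
    by (cases "0 \<le> g x"; cases "0 \<le> g z") (auto simp: mult_less_0_iff)
  then show "relu (g y) = ((z - y) * relu (g x) + (y - x) * relu (g z)) / (z - x)"
  proof cases
    case 1
    then have "0 \<le> g y" unfolding gy using xy yz by simp
    then show ?thesis using 1 gy by (simp add: relu_def)
  next
    case 2
    then have "g y \<le> 0" unfolding gy using xy yz
      by (simp add: divide_nonpos_pos add_nonpos_nonpos mult_nonneg_nonpos)
    then show ?thesis using 2 by (simp add: relu_def)
  qed
qed

lemma piecewise_affine_alternations_le_card:
  assumes g: "piecewise_affine B g" and t: "strict_mono t"
    and alt: "\<And>k. k \<le> 2 * n \<Longrightarrow> 0 < g (t k) \<longleftrightarrow> odd k"
  shows "n \<le> card B"
proof -
  define p where "p j = (SOME b. b \<in> B \<inter> {t (2 * j)<..<t (2 * j + 2)})" for j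
  have hit: "B \<inter> {t (2 * j)<..<t (2 * j + 2)} \<noteq> {}" if "j < n" for j
  proof (rule piecewise_affine_sign_change[OF g])
    show "t (2 * j) < t (2 * j + 1)" "t (2 * j + 1) < t (2 * j + 2)"
      using t by (simp_all add: strict_mono_less)
    show "g (t (2 * j)) \<le> 0" "0 < g (t (2 * j + 1))" "g (t (2 * j + 2)) \<le> 0"
      using alt[of "2 * j"] alt[of "2 * j + 1"] alt[of "2 * j + 2"] that by auto
  qed
  have p: "p j \<in> B \<inter> {t (2 * j)<..<t (2 * j + 2)}" if "j < n" for j
    unfolding p_def by (rule someI_ex) (use hit[OF that] in blast)
  have "strict_mono_on {..<n} p"
  proof (rule strict_mono_onI)
    fix i j assume "i \<in> {..<n}" "j \<in> {..<n}" "i < j"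
    then have "p i < t (2 * i + 2)" "t (2 * i + 2) \<le> t (2 * j)" "t (2 * j) < p j"
      using p[of i] p[of j] t by (auto simp: strict_mono_less_eq)
    then show "p i < p j" by linarith
  qed
  then have "inj_on p {..<n}" by (rule strict_mono_on_imp_inj_on)
  moreover have "p ` {..<n} \<subseteq> B" using p by auto
  ultimately have "card {..<n} \<le> card B"
    using card_inj_on_le piecewise_affine_finite[OF g] by blast
  then show ?thesis by simp
qed

lemma layer_apply_piecewise_affine:
  assumes H: "\<And>j. piecewise_affine B (\<lambda>t. H t j)"
  shows "\<exists>B'. (\<forall>i. piecewise_affine B' (\<lambda>t. layer_apply wi L (H t) i)) \<and>
              card B' + 1 \<le> (card B + 1) * (fst L + 1)"
proof -
  obtain w A c where L: "L = (w, A, c)" by (cases L) auto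
  have fin: "finite B" using piecewise_affine_finite[OF H] .
  define G where "G i t = (\<Sum>j<wi. A i j * H t j) + c i" for i t
  have G: "piecewise_affine B (G i)" for i
    unfolding G_def
    by (intro piecewise_affine_add piecewise_affine_sum piecewise_affine_cmult H
        piecewise_affine_const fin)
  define B' where "B' = B \<union> (\<Union>i<w. isolated_zeros B (G i))"
  have fin': "finite B'"
    unfolding B'_def using fin card_isolated_zeros(1)[OF G] by auto
  have "piecewise_affine B' (\<lambda>t. layer_apply wi L (H t) i)" for i
  proof (cases "i < w")
    case True
    have "piecewise_affine B' (\<lambda>t. relu (G i t))"
      by (rule piecewise_affine_subset[OF piecewise_affine_relu[OF G] _ fin'])
        (use True in \<open>auto simp: B'_def\<close>)
    then show ?thesis using True by (simp add: L layer_apply_def G_def)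
  next
    case False
    then show ?thesis
      using piecewise_affine_const[OF fin', of 0] by (simp add: L layer_apply_def)
  qed
  moreover have "card B' \<le> card B + w * (card B + 1)"
  proof -
    have "card B' \<le> card B + card (\<Union>i<w. isolated_zeros B (G i))"
      unfolding B'_def by (rule card_Un_le)
    also have "card (\<Union>i<w. isolated_zeros B (G i)) \<le> (\<Sum>i<w. card (isolated_zeros B (G i)))"
      by (rule card_UN_le) simp
    also have "\<dots> \<le> (\<Sum>i<w. card B + 1)"
      by (rule sum_mono) (rule card_isolated_zeros(2)[OF G])
    finally show ?thesis by simp
  qed
  ultimately show ?thesis by (intro exI[of _ B']) (simp add: L algebra_simps)
qed

lemma mlp_forward_piecewise_affine:
  assumes "\<forall>L\<in>set Ls. fst L \<le> w" "\<And>j. piecewise_affine B (\<lambda>t. H t j)"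
  shows "\<exists>B'. (\<forall>i. piecewise_affine B' (\<lambda>t. snd (mlp_forward wi Ls (H t)) i)) \<and>
              card B' + 1 \<le> (card B + 1) * (w + 1) ^ length Ls"
  using assms
proof (induction Ls arbitrary: wi H B)
  case Nil
  then show ?case by auto
next
  case (Cons L Ls)
  obtain B1 where B1: "\<And>i. piecewise_affine B1 (\<lambda>t. layer_apply wi L (H t) i)"
    "card B1 + 1 \<le> (card B + 1) * (fst L + 1)"
    using layer_apply_piecewise_affine[of B H, OF Cons.prems(2)] by blast
  obtain B' where
    B': "\<forall>i. piecewise_affine B' (\<lambda>t. snd (mlp_forward (fst L) Ls (layer_apply wi L (H t))) i)"
    "card B' + 1 \<le> (card B1 + 1) * (w + 1) ^ length Ls"
    using Cons.IH[where B = B1 and H = "\<lambda>t. layer_apply wi L (H t)" and wi = "fst L"]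
      Cons.prems(1) B1(1) by auto
  have "card B1 + 1 \<le> (card B + 1) * (w + 1)"
    using B1(2) Cons.prems(1) by (meson le_trans add_le_mono1 list.set_intros(1) mult_le_mono2)
  then have "card B' + 1 \<le> (card B + 1) * (w + 1) * (w + 1) ^ length Ls"
    using B'(2) by (meson le_trans mult_le_mono1)
  then show ?case using B'(1) by (auto simp: algebra_simps)
qed

lemma fst_mlp_forward: "fst (mlp_forward wi Ls h) = (if Ls = [] then wi else fst (last Ls))"
  by (induction Ls arbitrary: wi h) auto

definition mlp_score :: "layer list \<Rightarrow> (nat \<Rightarrow> real) \<Rightarrow> real \<Rightarrow> real \<times> real \<Rightarrow> real" where
  "mlp_score Ls v v0 x =
     (case mlp_forward 2 Ls (input_vec x) of (wd, h) \<Rightarrow> (\<Sum>i<wd. v i * h i) + v0)"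

lemma mlp_classifier_eq_score:
  "mlp_classifier Ls v v0 x = (if 0 < mlp_score Ls v v0 x then 1 else -1)"
  by (simp add: mlp_classifier_def mlp_score_def split: prod.split)

lemma mlp_score_eq:
  "mlp_score Ls v v0 x =
     (\<Sum>i<fst (mlp_forward 2 Ls h). v i * snd (mlp_forward 2 Ls (input_vec x)) i) + v0"
  by (simp add: mlp_score_def split: prod.split) (metis fst_conv fst_mlp_forward)

lemma mlp_score_piecewise_affine:
  assumes "\<forall>L\<in>set Ls. fst L \<le> w"
  shows "\<exists>B. piecewise_affine B (\<lambda>t. mlp_score Ls v v0 (t, 0)) \<and>
             card B + 1 \<le> (w + 1) ^ length Ls"
proof -
  have "piecewise_affine {} (\<lambda>t. input_vec (t, 0) j)" for j
  proof -
    have "(\<lambda>t. input_vec (t, 0) j) = (if j = 0 then (\<lambda>t. t) else (\<lambda>t. 0))"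
      by (auto simp: input_vec_def)
    then show ?thesis by (simp add: piecewise_affine_ident piecewise_affine_const)
  qed
  then obtain B
    where B: "\<And>i. piecewise_affine B (\<lambda>t. snd (mlp_forward 2 Ls (input_vec (t, 0))) i)"
      "card B + 1 \<le> (w + 1) ^ length Ls"
    using mlp_forward_piecewise_affine[OF assms] by fastforce
  have "piecewise_affine B (\<lambda>t. mlp_score Ls v v0 (t, 0))"
    unfolding mlp_score_eq[where h = "\<lambda>_. 0"]
    by (intro piecewise_affine_add piecewise_affine_sum piecewise_affine_cmult
        piecewise_affine_const B piecewise_affine_finite[OF B(1)])
  with B(2) show ?thesis by blast
qed

definition monotonic :: "(real \<Rightarrow> real) \<Rightarrow> bool" where
  "monotonic f \<longleftrightarrow> mono f \<or> antimono f"

lemma monotonic_affine: "monotonic f \<Longrightarrow> monotonic (\<lambda>t. a * f t + k)"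
  unfolding monotonic_def mono_def antimono_def
  by (cases "a \<ge> 0") (auto intro: mult_left_mono mult_left_mono_neg)

lemma monotonic_relu: "monotonic f \<Longrightarrow> monotonic (\<lambda>t. relu (f t))"
  unfolding monotonic_def mono_def antimono_def relu_def by (metis max.mono order_refl)

lemma monotonic_no_bump:
  assumes "monotonic f" "x \<le> y" "y \<le> z" "f x \<le> 0" "f z \<le> 0"
  shows "f y \<le> 0"
  using assms unfolding monotonic_def mono_def antimono_def by (meson order_trans)

lemma mlp_forward_width1_monotonic:
  assumes "\<forall>L\<in>set Ls. fst L = 1" "monotonic (\<lambda>t. h t 0)"
  shows "monotonic (\<lambda>t. snd (mlp_forward 1 Ls (h t)) 0)"
  using assms
proof (induction Ls arbitrary: h)
  case (Cons L Ls)
  obtain A c where L: "L = (1, A, c)" using Cons.prems(1) by (cases L) auto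
  have "monotonic (\<lambda>t. layer_apply 1 L (h t) 0)"
    using monotonic_relu[OF monotonic_affine[OF Cons.prems(2), of "A 0 0" "c 0"]]
    by (simp add: L layer_apply_def)
  then show ?case using Cons.IH Cons.prems(1) L by simp
qed simp

lemma mlp_score_width1_monotonic:
  assumes "Ls \<noteq> []" "\<forall>L\<in>set Ls. fst L = 1"
  shows "monotonic (\<lambda>t. mlp_score Ls v v0 (t, 0))"
proof -
  obtain A c Ls' where Ls: "Ls = (1, A, c) # Ls'"
    using assms by (cases Ls) auto
  define h where "h t = layer_apply 2 (1, A, c) (input_vec (t, 0))" for t
  have "monotonic (\<lambda>t. h t 0)"
    using monotonic_relu[OF monotonic_affine[of "\<lambda>t. t" "A 0 0" "c 0"]]
    by (simp add: h_def layer_apply_def input_vec_def numeral_2_eq_2 monotonic_def mono_def)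
  then have "monotonic (\<lambda>t. snd (mlp_forward 1 Ls' (h t)) 0)"
    using mlp_forward_width1_monotonic assms(2) Ls by simp
  moreover have "fst (mlp_forward 2 Ls (\<lambda>_. 0)) = 1"
    using assms by (simp add: fst_mlp_forward)
  ultimately show ?thesis
    unfolding mlp_score_eq[where h = "\<lambda>_. 0"] using monotonic_affine
    by (simp add: Ls h_def)
qed

lemma mlp_alternations_lt:
  assumes "\<forall>L\<in>set Ls. fst L \<le> w" "strict_mono t"
    and "\<And>k. k \<le> 2 * n \<Longrightarrow> mlp_classifier Ls v v0 (t k, 0) = (if odd k then 1 else -1)"
  shows "n < (w + 1) ^ length Ls"
proof -
  obtain B where B: "piecewise_affine B (\<lambda>t. mlp_score Ls v v0 (t, 0))"
      "card B + 1 \<le> (w + 1) ^ length Ls"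
    using mlp_score_piecewise_affine[OF assms(1)] by blast
  have "0 < mlp_score Ls v v0 (t k, 0) \<longleftrightarrow> odd k" if "k \<le> 2 * n" for k
    using assms(3)[OF that] by (simp add: mlp_classifier_eq_score split: if_splits)
  then have "n \<le> card B"
    by (rule piecewise_affine_alternations_le_card[OF B(1) assms(2)])
  with B(2) show ?thesis by linarith
qed

lemma mlp_width1_no_alternation:
  assumes "Ls \<noteq> []" "\<forall>L\<in>set Ls. fst L = 1" "x \<le> y" "y \<le> z"
    and "mlp_classifier Ls v v0 (x, 0) = -1" "mlp_classifier Ls v v0 (y, 0) = 1"
      "mlp_classifier Ls v v0 (z, 0) = -1"
  shows False
  using monotonic_no_bump[OF mlp_score_width1_monotonic[OF assms(1,2), of v v0] assms(3,4)]
    assms(5-7)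
  by (simp add: mlp_classifier_eq_score split: if_splits)

definition tent :: "real \<Rightarrow> real" where
  "tent y = 2 * relu y - 4 * relu (y - 1/2)"

lemma tent_dyadic:
  assumes "k \<le> 2 ^ Suc M"
  shows "tent (real k / 2 ^ Suc M) = real (if k \<le> 2 ^ M then k else 2 ^ Suc M - k) / 2 ^ M"
proof (cases "k \<le> 2 ^ M")
  case True
  then have "real k / 2 ^ Suc M \<le> 1/2" by (simp add: field_simps)
  with True show ?thesis by (simp add: tent_def relu_def field_simps)
next
  case False
  then have "real k / 2 ^ Suc M > 1/2" by (simp add: field_simps)
  with False assms show ?thesis by (simp add: tent_def relu_def field_simps of_nat_diff)
qed

lemma tent_iterate_dyadic:
  "k \<le> 2 ^ M \<Longrightarrow> (tent ^^ M) (real k / 2 ^ M) = (if odd k then 1 else 0)"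
proof (induction M arbitrary: k)
  case 0
  then have "k = 0 \<or> k = 1" by auto
  then show ?case by auto
next
  case (Suc M)
  define k' where "k' = (if k \<le> 2 ^ M then k else 2 ^ Suc M - k)"
  have "k' \<le> 2 ^ M" "odd k' \<longleftrightarrow> odd k"
    using Suc.prems by (auto simp: k'_def)
  then show ?case
    using Suc.IH tent_dyadic[OF Suc.prems]
    by (simp add: funpow_Suc_right k'_def del: funpow.simps)
qed

(* tent y is a linear readout of this hidden state, so each tent_layer applies one more tent. *)
definition tent_features :: "real \<Rightarrow> nat \<Rightarrow> real" where
  "tent_features y i = (if i = 0 then relu y else if i = 1 then relu (y - 1/2) else 0)"

definition input_layer :: layer where
  "input_layer = (2, \<lambda>i j. if j = 0 then 1 else 0, \<lambda>i. if i = 0 then 0 else -1/2)"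

definition tent_layer :: layer where
  "tent_layer = (2, \<lambda>i j. if j = 0 then 2 else -4, \<lambda>i. if i = 0 then 0 else -1/2)"

definition tent_readout :: "nat \<Rightarrow> real" where
  "tent_readout i = (if i = 0 then 2 else -4)"

definition sawtooth_net :: "nat \<Rightarrow> layer list" where
  "sawtooth_net m = input_layer # replicate (m + 1) tent_layer"

definition sawtooth :: "nat \<Rightarrow> real \<times> real \<Rightarrow> int" where
  "sawtooth m = mlp_classifier (sawtooth_net m) tent_readout (-1/2)"

lemma input_layer_apply: "layer_apply 2 input_layer (input_vec (t, s)) = tent_features t"
  by (auto simp: layer_apply_def input_layer_def tent_features_def input_vec_def numeral_2_eq_2)

lemma tent_layer_apply: "layer_apply 2 tent_layer (tent_features y) = tent_features (tent y)"
  by (auto simp: layer_apply_def tent_layer_def tent_features_def tent_def numeral_2_eq_2)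

lemma mlp_forward_tent_layers:
  "mlp_forward 2 (replicate n tent_layer) (tent_features y) = (2, tent_features ((tent ^^ n) y))"
proof (induction n arbitrary: y)
  case (Suc n)
  have "fst tent_layer = 2" by (simp add: tent_layer_def)
  with Suc show ?case by (simp add: tent_layer_apply funpow_swap1)
qed simp

lemma sawtooth_eq: "sawtooth m (t, s) = (if 1/2 < (tent ^^ (m + 2)) t then 1 else -1)"
proof -
  have "fst input_layer = 2" by (simp add: input_layer_def)
  then have "mlp_forward 2 (sawtooth_net m) (input_vec (t, s)) =
      mlp_forward 2 (replicate (m + 1) tent_layer) (tent_features t)"
    by (simp add: sawtooth_net_def input_layer_apply del: replicate_Suc)
  also have "\<dots> = (2, tent_features ((tent ^^ (m + 1)) t))"
    by (rule mlp_forward_tent_layers)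
  finally have "mlp_forward 2 (sawtooth_net m) (input_vec (t, s)) =
      (2, tent_features ((tent ^^ (m + 1)) t))" .
  moreover have "(\<Sum>i<2. tent_readout i * tent_features y i) = tent y" for y
    by (simp add: numeral_2_eq_2 tent_readout_def tent_features_def tent_def)
  ultimately show ?thesis by (simp add: sawtooth_def mlp_classifier_def)
qed

lemma sawtooth_dyadic:
  "k \<le> 2 ^ (m + 2) \<Longrightarrow> sawtooth m (real k / 2 ^ (m + 2), s) = (if odd k then 1 else -1)"
  by (simp only: sawtooth_eq tent_iterate_dyadic) simp

lemma root_power_le:
  assumes "0 < n" "0 \<le> b" "0 \<le> x" "b ^ m \<le> x ^ n"
  shows "root n b ^ m \<le> x"
proof -
  have "root n b ^ m = root n (b ^ m)" using assms(1) by (simp add: real_root_power)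
  also have "\<dots> \<le> root n (x ^ n)" using assms by simp
  also have "\<dots> = x" using assms by (simp add: real_root_power_cancel)
  finally show ?thesis .
qed

lemma root_two_pow_le_of_pow_lt:
  assumes "2 \<le> w" "2 ^ (m + 1) < (w + 1) ^ d" "1 \<le> d"
  shows "root (2 * d) 2 ^ m \<le> real w"
proof -
  have "2 * w \<le> w * w" using assms(1) by (rule mult_right_mono) simp
  then have "w + 1 \<le> w ^ 2" using assms(1) unfolding power2_eq_square by linarith
  have "(2::nat) ^ m \<le> 2 ^ (m + 1)" by simp
  also note assms(2)
  also have "(w + 1) ^ d \<le> (w ^ 2) ^ d" using \<open>w + 1 \<le> w ^ 2\<close> by (rule power_mono) simp
  finally have "2 ^ m \<le> w ^ (2 * d)" by (simp add: power_mult)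
  then have "(2::real) ^ m \<le> real w ^ (2 * d)" by (metis of_nat_le_iff of_nat_numeral of_nat_power)
  then show ?thesis using root_power_le assms(3) by simp
qed

lemma sawtooth_width_lower_bound:
  assumes "length Ls = d" "1 \<le> d" "\<forall>L\<in>set Ls. fst L = w"
    and "\<forall>x. mlp_classifier Ls v v0 x = sawtooth m x"
  shows "root (2 * d) 2 ^ m \<le> real w"
proof -
  define t where "t k = real k / 2 ^ (m + 2)" for k :: nat
  have t: "strict_mono t" by (auto simp: strict_mono_def t_def divide_strict_right_mono)
  have alt: "mlp_classifier Ls v v0 (t k, 0) = (if odd k then 1 else -1)"
    if "k \<le> 2 * 2 ^ (m + 1)" for k
    using assms(4) sawtooth_dyadic[of k m 0] that by (simp add: t_def)
  have "w \<noteq> 1"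
  proof
    assume "w = 1"
    have "t 0 \<le> t 1" "t 1 \<le> t 2" using t by (simp_all add: strict_mono_less_eq)
    moreover have "Ls \<noteq> []" using assms(1,2) by auto
    ultimately show False
      using mlp_width1_no_alternation[of Ls "t 0" "t 1" "t 2" v v0] assms(3) \<open>w = 1\<close>
        alt[of 0] alt[of 1] alt[of 2] by simp
  qed
  have widths: "\<forall>L\<in>set Ls. fst L \<le> w" using assms(3) by simp
  have many: "2 ^ (m + 1) < (w + 1) ^ d"
    using mlp_alternations_lt[OF widths t alt] assms(1) by simp
  have "w \<noteq> 0"
  proof
    assume "w = 0"
    with many show False by simp
  qed
  with \<open>w \<noteq> 1\<close> have "2 \<le> w" by simp
  then show ?thesis using root_two_pow_le_of_pow_lt[OF _ many assms(2)] by simp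
qed

theorem theorem1:
  shows "\<exists>f :: nat \<Rightarrow> real \<times> real \<Rightarrow> int.
    (\<forall>m\<ge>1. \<forall>x. f m x \<in> {-1, 1}) \<and>
    (\<forall>d\<ge>1. \<exists>b::real. b > 1 \<and>
       (\<forall>m\<ge>1. \<forall>(Ls :: layer list) v v0 (w::nat).
          length Ls = d \<longrightarrow> (\<forall>L\<in>set Ls. fst L = w) \<longrightarrow>
          (\<forall>x. mlp_classifier Ls v v0 x = f m x) \<longrightarrow>
          real w \<ge> b ^ m)) \<and>
    (\<forall>m\<ge>1. \<exists>(Ls :: layer list) v v0.
          length Ls = m + 2 \<and> (\<forall>L\<in>set Ls. fst L \<le> 4) \<and>
          (\<forall>x. mlp_classifier Ls v v0 x = f m x))"
proof (intro exI[of _ sawtooth] conjI allI impI)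
  show "sawtooth m x \<in> {-1, 1}" for m x
    by (simp add: sawtooth_def mlp_classifier_eq_score)
next
  fix d :: nat
  assume "d \<ge> 1"
  then show "\<exists>b::real. b > 1 \<and>
       (\<forall>m\<ge>1. \<forall>(Ls :: layer list) v v0 (w::nat).
          length Ls = d \<longrightarrow> (\<forall>L\<in>set Ls. fst L = w) \<longrightarrow>
          (\<forall>x. mlp_classifier Ls v v0 x = sawtooth m x) \<longrightarrow>
          real w \<ge> b ^ m)"
    using sawtooth_width_lower_bound by (intro exI[of _ "root (2 * d) 2"]) auto
next
  fix m :: nat
  have "fst input_layer = 2" "fst tent_layer = 2"
    by (simp_all add: input_layer_def tent_layer_def)
  then show "\<exists>(Ls :: layer list) v v0.
          length Ls = m + 2 \<and> (\<forall>L\<in>set Ls. fst L \<le> 4) \<and>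
          (\<forall>x. mlp_classifier Ls v v0 x = sawtooth m x)"
    by (intro exI[of _ "sawtooth_net m"] exI[of _ tent_readout] exI[of _ "-1/2"])
      (auto simp: sawtooth_net_def sawtooth_def)
qed

end
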